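(* Consider an ESP instance with integer weights and let $L^*$ be the minimum total latency of a feasible expanding search pattern. Fix $\varepsilon>0$, let $W=\sum_{v\in V}w_v$ and $\omega=\lceil \log W/\log(1+\varepsilon)\rceil$. For each $i\in\{0,\dots,\omega\}$ let $T_i$ be the tree obtained by applying a polynomial-time $5/2$-approximation algorithm for the quota version of the prize-collecting Steiner tree problem with quota $q_i=W-W(1+\varepsilon)^{-i}$, so that $T_i$ contains $r$, has total vertex weight at least $q_i$, and has length $\ell(T_i)=\sum_{e\in E(T_i)}\ell_e$ at most $5/2$ times the minimum length of such a tree; here $T_0=(\{r\},\emptyset)$. Let $H$ be the directed graph with vertex set $\{0,\dots,\omega\}$, arcs $(i,j)$ for all $i<j$, and arc costs $c_{i,j}=W(1+\varepsilon)^{-i}\ell(T_j)$. Then a shortest $(0,\omega)$-path in $H$ has cost at most $\frac52(1+\varepsilon)eL^*$.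
   Context: ESP: connected undirected graph $G=(V,E)$, root $r$, edge lengths $\ell_e\in\mathbb{Z}_{\ge0}$, vertex weights $w_v\in\mathbb{Z}_{\ge0}$, $V^*=\{v:w_v>0\}$. An expanding search pattern is a sequence $\sigma=(e_1,\dots,e_m)$ of edges with $r\in e_1$ such that $\{e_1,\dots,e_i\}$ is a tree for every $i$; it is feasible if it visits all of $V^*$. For $v\in V^*\setminus\{r\}$, $k_v=\min\{i:v\in e_i\}$, $k_r=0$, latency $L_v(\sigma)=\sum_{i\le k_v}\ell_{e_i}$, total latency $L(\sigma)=\sum_{v\in V^*}w_vL_v(\sigma)$. The cost of a path in $H$ is the sum of its arc costs. *)

theory Defs
  imports Complex_Main
begin

definition adj :: "'a set set \<Rightarrow> ('a \<times> 'a) set" where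
  "adj F = {(u, v). {u, v} \<in> F}"

definition graph :: "'a set \<Rightarrow> 'a set set \<Rightarrow> bool" where
  "graph V E \<longleftrightarrow> finite V \<and> (\<forall>e\<in>E. e \<subseteq> V \<and> card e = 2)"

definition connected_graph :: "'a set \<Rightarrow> 'a set set \<Rightarrow> bool" where
  "connected_graph V E \<longleftrightarrow> graph V E \<and> V \<noteq> {} \<and>
     (\<forall>u\<in>V. \<forall>v\<in>V. (u, v) \<in> (adj E)\<^sup>*)"

definition is_tree :: "'a set \<Rightarrow> 'a set set \<Rightarrow> bool" where
  "is_tree U F \<longleftrightarrow> connected_graph U F \<and> card F + 1 = card U"

definition expanding_pattern :: "'a set set \<Rightarrow> 'a \<Rightarrow> 'a set list \<Rightarrow> bool" where
  "expanding_pattern E r \<sigma> \<longleftrightarrow> set \<sigma> \<subseteq> E \<and> (\<sigma> \<noteq> [] \<longrightarrow> r \<in> hd \<sigma>) \<and>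
     (\<forall>i\<in>{1..length \<sigma>}. is_tree (\<Union> (set (take i \<sigma>))) (set (take i \<sigma>)))"

definition Vstar :: "'a set \<Rightarrow> ('a \<Rightarrow> nat) \<Rightarrow> 'a set" where
  "Vstar V w = {v \<in> V. w v > 0}"

definition feasible_pattern ::
  "'a set \<Rightarrow> 'a set set \<Rightarrow> 'a \<Rightarrow> ('a \<Rightarrow> nat) \<Rightarrow> 'a set list \<Rightarrow> bool" where
  "feasible_pattern V E r w \<sigma> \<longleftrightarrow> expanding_pattern E r \<sigma> \<and>
     Vstar V w \<subseteq> insert r (\<Union> (set \<sigma>))"

definition latency :: "('a set \<Rightarrow> nat) \<Rightarrow> 'a \<Rightarrow> 'a set list \<Rightarrow> 'a \<Rightarrow> nat" where
  "latency len r \<sigma> v = (if v = r then 0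
      else sum_list (map len (take (Suc (LEAST i. i < length \<sigma> \<and> v \<in> \<sigma> ! i)) \<sigma>)))"

definition total_latency ::
  "'a set \<Rightarrow> ('a set \<Rightarrow> nat) \<Rightarrow> ('a \<Rightarrow> nat) \<Rightarrow> 'a \<Rightarrow> 'a set list \<Rightarrow> nat" where
  "total_latency V len w r \<sigma> = (\<Sum>v\<in>Vstar V w. w v * latency len r \<sigma> v)"

definition ESP_opt ::
  "'a set \<Rightarrow> 'a set set \<Rightarrow> 'a \<Rightarrow> ('a set \<Rightarrow> nat) \<Rightarrow> ('a \<Rightarrow> nat) \<Rightarrow> nat" where
  "ESP_opt V E r len w = Inf {total_latency V len w r \<sigma> | \<sigma>. feasible_pattern V E r w \<sigma>}"

definition tree_length :: "('a set \<Rightarrow> nat) \<Rightarrow> 'a set \<times> 'a set set \<Rightarrow> nat" where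
  "tree_length len T = (\<Sum>e\<in>snd T. len e)"

definition tree_weight :: "('a \<Rightarrow> nat) \<Rightarrow> 'a set \<times> 'a set set \<Rightarrow> nat" where
  "tree_weight w T = (\<Sum>v\<in>fst T. w v)"

definition rooted_subtree :: "'a set \<Rightarrow> 'a set set \<Rightarrow> 'a \<Rightarrow> 'a set \<times> 'a set set \<Rightarrow> bool" where
  "rooted_subtree V E r T \<longleftrightarrow> fst T \<subseteq> V \<and> snd T \<subseteq> E \<and> r \<in> fst T \<and> is_tree (fst T) (snd T)"

definition quota_opt ::
  "'a set \<Rightarrow> 'a set set \<Rightarrow> 'a \<Rightarrow> ('a set \<Rightarrow> nat) \<Rightarrow> ('a \<Rightarrow> nat) \<Rightarrow> real \<Rightarrow> nat" where
  "quota_opt V E r len w q = Inf {tree_length len T | T. rooted_subtree V E r T \<and> real (tree_weight w T) \<ge> q}"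

definition H_path :: "nat \<Rightarrow> nat list \<Rightarrow> bool" where
  "H_path \<omega> p \<longleftrightarrow> p \<noteq> [] \<and> hd p = 0 \<and> last p = \<omega> \<and> set p \<subseteq> {0..\<omega>} \<and>
     (\<forall>k. Suc k < length p \<longrightarrow> p ! k < p ! Suc k)"

definition path_cost :: "(nat \<Rightarrow> nat \<Rightarrow> real) \<Rightarrow> nat list \<Rightarrow> real" where
  "path_cost c p = (\<Sum>k<length p - 1. c (p ! k) (p ! Suc k))"

definition shortest_path_cost :: "nat \<Rightarrow> (nat \<Rightarrow> nat \<Rightarrow> real) \<Rightarrow> real" where
  "shortest_path_cost \<omega> c = Min {path_cost c p | p. H_path \<omega> p}"

end

(*
  Let sigma be an optimal pattern and R t the weight not yet found at time t, so that
  L* = (sum over t of R t).  The edges of sigma completed by time tau_j = #{t. R t > W/(1+eps)^j}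
  form a rooted tree of length at most tau_j meeting the quota q_j, hence len(T_j) <= 5/2 tau_j.
  Fix k >= 1 with (1+eps)^k <= e eps k and consider the k paths 0, s+1, s+1+k, s+1+2k, ..., omega
  of H (s < k).  Charging an arc (i, j) to the times t with R t > W/(1+eps)^j, the charges at a
  fixed time t over all k paths add up to at most R t (1+eps)^(k+1)/eps <= (1+eps) e k R t.  So the
  k paths cost at most 5/2 (1+eps) e k L* in total, and one of them costs at most 5/2 (1+eps) e L*.
*)
theory Submission
  imports Defs
begin

section \<open>Choice of the stride\<close>

lemma exists_power_le_exp_mult:
  fixes a :: real
  assumes "a > 1"
  shows "\<exists>k::nat. k \<ge> 1 \<and> a ^ k \<le> exp 1 * (a - 1) * k"
proof -
  \<comment> \<open>With k = ceiling (1 / ln a) write k ln a = 1 + ln a - z with 0 < z <= ln a; the claim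
    reduces to a <= (a - 1) k (1 + z), which holds as (1 + ln a - z)(1 + z) >= 1 + ln a
    and ln a <= a - 1.\<close>
  define L where "L = ln a"
  have L: "0 < L" "L \<le> a - 1"
    using assms ln_le_minus_one[of a] by (simp_all add: L_def)
  define k where "k = nat \<lceil>1 / L\<rceil>"
  have "real k = \<lceil>1 / L\<rceil>"
    using L(1) by (simp add: k_def)
  hence "1 / L \<le> k" "k < 1 / L + 1"
    using ceiling_correct[of "1 / L"] by linarith+
  hence k: "1 \<le> k * L" "k * L < 1 + L"
    using L(1) by (simp_all add: field_simps)
  define z where "z = 1 + L - k * L"
  have z: "0 < z" "z \<le> L" using k by (simp_all add: z_def)
  have "a \<le> (a - 1) * (1 + L) / L"
    using L by (simp add: field_simps)
  also have "\<dots> \<le> (a - 1) * ((1 + L - z) * (1 + z)) / L"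
    using L z by (intro divide_right_mono mult_left_mono) (auto simp: algebra_simps)
  also have "\<dots> = (a - 1) * k * (1 + z)"
    using L by (simp add: z_def field_simps)
  also have "\<dots> \<le> (a - 1) * k * exp z"
    using assms by (intro mult_left_mono exp_ge_add_one_self) simp
  finally have key: "a * exp (- z) \<le> (a - 1) * k"
    by (simp add: exp_minus field_simps)
  have "a ^ k = exp (k * L)"
    using assms by (simp add: L_def exp_of_nat_mult)
  also have "\<dots> = exp (1 + L + - z)"
    by (simp add: z_def)
  also have "\<dots> = exp 1 * a * exp (- z)"
    using assms by (simp only: exp_add L_def exp_ln)
  also have "\<dots> \<le> exp 1 * (a - 1) * k"
    using key by (simp add: mult.assoc)
  finally have "a ^ k \<le> exp 1 * (a - 1) * k" .
  moreover have "k \<ge> 1"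
    using k(1) by (cases k) auto
  ultimately show ?thesis
    by blast
qed

lemma sum_inverse_power_le:
  fixes a :: real
  assumes "a > 1"
  shows "(\<Sum>x = m..<n. 1 / a ^ x) \<le> a / ((a - 1) * a ^ m)"
proof (cases "m \<le> n")
  case True
  have "(a - 1) * (\<Sum>x = m..<n. 1 / a ^ x) = (\<Sum>x = m..<n. - (a / a ^ Suc x) - - (a / a ^ x))"
    using assms by (simp add: sum_distrib_left field_simps)
  also have "\<dots> = a / a ^ m - a / a ^ n"
    using True by (subst sum_Suc_diff') simp_all
  also have "\<dots> \<le> a / a ^ m"
    using assms by simp
  finally show ?thesis
    using assms by (simp add: field_simps)
qed (use assms in simp)

lemma stride_threshold_sum_le:
  fixes a :: real
  assumes "a > 1" "1 \<le> j"
  shows "card {s. s < k \<and> j \<le> Suc s} + (\<Sum>x | 1 \<le> x \<and> x < \<omega> \<and> j \<le> x + k. 1 / a ^ x)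
    \<le> a ^ (k + 1) / ((a - 1) * a ^ j)"
proof -
  define m where "m = max 1 (j - k)"
  have "{x. 1 \<le> x \<and> x < \<omega> \<and> j \<le> x + k} = {m..<\<omega>}"
    by (auto simp: m_def)
  hence tail: "(\<Sum>x | 1 \<le> x \<and> x < \<omega> \<and> j \<le> x + k. 1 / a ^ x) \<le> a / ((a - 1) * a ^ m)"
    using sum_inverse_power_le[OF assms(1)] by simp
  have "{s. s < k \<and> j \<le> Suc s} = {j - 1..<k}"
    using assms(2) by auto
  hence card: "card {s. s < k \<and> j \<le> Suc s} = k + 1 - j"
    using assms(2) by simp
  show ?thesis
  proof (cases "j \<le> k")
    case True
    define u where "u = k + 1 - j"
    have "m = 1"
      using True by (simp add: m_def)
    hence "card {s. s < k \<and> j \<le> Suc s} + (\<Sum>x | 1 \<le> x \<and> x < \<omega> \<and> j \<le> x + k. 1 / a ^ x)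
        \<le> u + a / ((a - 1) * a)"
      using tail card by (simp add: u_def)
    also have "\<dots> = (1 + u * (a - 1)) / (a - 1)"
      using assms by (simp add: field_simps)
    also have "\<dots> \<le> a ^ u / (a - 1)"
      using Bernoulli_inequality[of "a - 1" u] assms by (intro divide_right_mono) auto
    also have "\<dots> = a ^ (k + 1) / ((a - 1) * a ^ j)"
      using assms True by (simp add: u_def power_diff field_simps)
    finally show ?thesis .
  next
    case False
    hence "m = j - k"
      by (simp add: m_def)
    hence "a / ((a - 1) * a ^ m) = a ^ (k + 1) / ((a - 1) * a ^ j)"
      using assms False by (simp add: power_diff field_simps)
    moreover have "card {s. s < k \<and> j \<le> Suc s} = 0"
      using card False by simp
    ultimately show ?thesis
      using tail by linarith
  qed
qed

(* Total charge at a single time over the k stride paths, R being the weight still unfound then. *)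
lemma stride_charge_le:
  fixes W a R :: real
  assumes "a > 1" "0 \<le> R" "R \<le> W"
  shows "(\<Sum>s<k. if W / a ^ min \<omega> (Suc s) < R then W else 0)
       + (\<Sum>x = 1..<\<omega>. if W / a ^ min \<omega> (x + k) < R then W / a ^ x else 0)
       \<le> R * a ^ (k + 1) / (a - 1)"
proof (cases "\<exists>j\<le>\<omega>. W / a ^ j < R")
  case False
  hence "\<not> W / a ^ min \<omega> y < R" for y
    by simp
  thus ?thesis
    using assms by simp
next
  case True
  define j0 where "j0 = (LEAST j. j \<le> \<omega> \<and> W / a ^ j < R)"
  have j0: "j0 \<le> \<omega>" "W / a ^ j0 < R"
    using LeastI_ex[OF True[unfolded Bex_def[symmetric]]] by (auto simp: j0_def)
  have "1 \<le> j0"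
    using j0(2) assms(3) by (cases j0) auto
  have threshold: "W / a ^ min \<omega> y < R \<longleftrightarrow> j0 \<le> y" for y
  proof
    assume "W / a ^ min \<omega> y < R"
    hence "j0 \<le> min \<omega> y"
      unfolding j0_def by (intro Least_le) simp
    thus "j0 \<le> y" by simp
  next
    assume "j0 \<le> y"
    hence "W / a ^ min \<omega> y \<le> W / a ^ j0"
      using assms j0(1) by (intro divide_left_mono power_increasing) auto
    thus "W / a ^ min \<omega> y < R"
      using j0(2) by linarith
  qed
  have "(\<Sum>s<k. if W / a ^ min \<omega> (Suc s) < R then W else 0)
       + (\<Sum>x = 1..<\<omega>. if W / a ^ min \<omega> (x + k) < R then W / a ^ x else 0)
      = W * (card {s. s < k \<and> j0 \<le> Suc s} + (\<Sum>x | 1 \<le> x \<and> x < \<omega> \<and> j0 \<le> x + k. 1 / a ^ x))"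
    by (simp add: threshold sum.If_cases Int_def distrib_left sum_distrib_left)
  also have "\<dots> \<le> W * (a ^ (k + 1) / ((a - 1) * a ^ j0))"
    using stride_threshold_sum_le[OF assms(1) \<open>1 \<le> j0\<close>] assms by (intro mult_left_mono) auto
  also have "\<dots> = W / a ^ j0 * a ^ (k + 1) / (a - 1)"
    by simp
  also have "\<dots> \<le> R * a ^ (k + 1) / (a - 1)"
    using j0(2) assms(1) by (intro divide_right_mono mult_right_mono) auto
  finally show ?thesis .
qed

section \<open>Stride paths in H\<close>

lemma path_cost_singleton [simp]: "path_cost c [x] = 0"
  by (simp add: path_cost_def)

lemma path_cost_Cons:
  "ys \<noteq> [] \<Longrightarrow> path_cost c (x # ys) = c x (hd ys) + path_cost c ys"
  by (cases ys) (simp_all add: path_cost_def sum.lessThan_Suc_shift del: sum.lessThan_Suc)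

function stride_path :: "nat \<Rightarrow> nat \<Rightarrow> nat \<Rightarrow> nat list" where
  "stride_path k \<omega> i = (if \<omega> \<le> i \<or> k = 0 then [\<omega>] else i # stride_path k \<omega> (i + k))"
  by pat_completeness auto
termination
  by (relation "measure (\<lambda>(k, \<omega>, i). \<omega> - i)") auto

declare stride_path.simps [simp del]

lemma stride_path_not_Nil: "stride_path k \<omega> i \<noteq> []"
  by (subst stride_path.simps) simp

lemma hd_stride_path: "k > 0 \<Longrightarrow> hd (stride_path k \<omega> i) = min \<omega> i"
  by (subst stride_path.simps) simp

lemma last_stride_path: "last (stride_path k \<omega> i) = \<omega>"
  by (induction k \<omega> i rule: stride_path.induct)
    (subst stride_path.simps, simp add: stride_path_not_Nil)

lemma set_stride_path: "x \<in> set (stride_path k \<omega> i) \<Longrightarrow> min \<omega> i \<le> x \<and> x \<le> \<omega>"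
  by (induction k \<omega> i rule: stride_path.induct)
    (subst (asm) stride_path.simps, fastforce split: if_splits)

lemma sorted_stride_path: "sorted_wrt (<) (stride_path k \<omega> i)"
proof (induction k \<omega> i rule: stride_path.induct)
  case (1 k \<omega> i)
  have "i < x" if "\<not> (\<omega> \<le> i \<or> k = 0)" "x \<in> set (stride_path k \<omega> (i + k))" for x
    using that set_stride_path[OF that(2)] by auto
  thus ?case
    using "1.IH" by (subst stride_path.simps) auto
qed

lemma stride_indices_step:
  fixes \<omega> i k :: nat
  shows "{x. x < \<omega> \<and> (\<exists>m. x = i + m * k)}
     = (if i < \<omega> then insert i {x. x < \<omega> \<and> (\<exists>m. x = i + k + m * k)} else {})"
proof -
  have "(\<exists>m. x = i + m * k) \<longleftrightarrow> x = i \<or> (\<exists>m. x = i + k + m * k)" for x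
  proof
    assume "\<exists>m. x = i + m * k"
    then obtain m where x: "x = i + m * k" ..
    show "x = i \<or> (\<exists>m. x = i + k + m * k)"
    proof (cases m)
      case (Suc m')
      hence "x = i + k + m' * k"
        using x by simp
      thus ?thesis by blast
    qed (use x in simp)
  next
    assume "x = i \<or> (\<exists>m. x = i + k + m * k)"
    thus "\<exists>m. x = i + m * k"
      by (metis add.assoc add_0_right mult_0 mult_Suc)
  qed
  thus ?thesis
    by auto
qed

lemma path_cost_stride_path:
  assumes "k > 0"
  shows "path_cost c (stride_path k \<omega> i)
    = (\<Sum>x | x < \<omega> \<and> (\<exists>m. x = i + m * k). c x (min \<omega> (x + k)))"
  using assms
proof (induction k \<omega> i rule: stride_path.induct)
  case (1 k \<omega> i)
  show ?case
  proof (cases "\<omega> \<le> i")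
    case True
    thus ?thesis
      by (subst stride_path.simps, subst stride_indices_step) simp
  next
    case False
    have "finite {x. x < \<omega> \<and> (\<exists>m. x = i + k + m * k)}"
      by simp
    moreover have "i \<notin> {x. x < \<omega> \<and> (\<exists>m. x = i + k + m * k)}"
      using "1.prems" by auto
    ultimately show ?thesis
      using False "1.IH" "1.prems"
      by (subst stride_path.simps, subst stride_indices_step)
        (simp add: path_cost_Cons stride_path_not_Nil hd_stride_path)
  qed
qed

lemma stride_class_iff:
  fixes k s x :: nat
  assumes "s < k"
  shows "(\<exists>m. x = Suc s + m * k) \<longleftrightarrow> 1 \<le> x \<and> (x - 1) mod k = s"
proof
  assume "1 \<le> x \<and> (x - 1) mod k = s"
  hence "x = Suc s + (x - 1) div k * k"
    using div_mult_mod_eq[of "x - 1" k] by linarith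
  thus "\<exists>m. x = Suc s + m * k" ..
qed (use assms in auto)

lemma sum_stride_classes:
  fixes h :: "nat \<Rightarrow> 'b::comm_monoid_add"
  assumes "k > 0"
  shows "(\<Sum>s<k. \<Sum>x | x < \<omega> \<and> (\<exists>m. x = Suc s + m * k). h x) = (\<Sum>x = 1..<\<omega>. h x)"
proof -
  have "{x \<in> {1..<\<omega>}. (x - 1) mod k = s} = {x. x < \<omega> \<and> (\<exists>m. x = Suc s + m * k)}"
    if "s < k" for s
    using stride_class_iff[OF that] by auto
  hence "(\<Sum>s<k. \<Sum>x | x < \<omega> \<and> (\<exists>m. x = Suc s + m * k). h x)
      = (\<Sum>s<k. \<Sum>x \<in> {x \<in> {1..<\<omega>}. (x - 1) mod k = s}. h x)"
    by simp
  also have "\<dots> = (\<Sum>x = 1..<\<omega>. h x)"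
    using assms by (intro sum.group) auto
  finally show ?thesis .
qed

lemma H_path_stride_path:
  assumes "1 \<le> \<omega>"
  shows "H_path \<omega> (0 # stride_path k \<omega> (Suc s))"
proof -
  have "0 < x \<and> x \<le> \<omega>" if "x \<in> set (stride_path k \<omega> (Suc s))" for x
    using set_stride_path[OF that] assms by auto
  hence "sorted_wrt (<) (0 # stride_path k \<omega> (Suc s))" "set (0 # stride_path k \<omega> (Suc s)) \<subseteq> {0..\<omega>}"
    using sorted_stride_path by auto
  thus ?thesis
    unfolding H_path_def sorted_wrt_iff_nth_Suc_transp[OF transp_on_less]
    by (simp add: stride_path_not_Nil last_stride_path)
qed

lemma finite_H_paths: "finite {p. H_path \<omega> p}"
proof (rule finite_subset)
  show "{p. H_path \<omega> p} \<subseteq> {p. set p \<subseteq> {0..\<omega>} \<and> distinct p}"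
    by (auto simp: H_path_def sorted_wrt_iff_nth_Suc_transp[symmetric] strict_sorted_iff)
qed (rule finite_subset_distinct, simp)

lemma shortest_path_cost_le: "H_path \<omega> p \<Longrightarrow> shortest_path_cost \<omega> c \<le> path_cost c p"
  unfolding shortest_path_cost_def
  by (rule Min_le) (use finite_H_paths[of \<omega>] in auto)

lemma exists_le_of_sum_le:
  fixes f :: "nat \<Rightarrow> real" and B :: real
  assumes "k > 0" "(\<Sum>s<k. f s) \<le> k * B"
  shows "\<exists>s<k. f s \<le> B"
proof (rule ccontr)
  assume "\<not> (\<exists>s<k. f s \<le> B)"
  hence "(\<Sum>s<k. B) < (\<Sum>s<k. f s)"
    using assms(1) by (intro sum_strict_mono) auto
  thus False
    using assms(2) by simp
qed

lemma sum_path_cost_stride_paths: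
  assumes "k > 0"
  shows "(\<Sum>s<k. path_cost c (0 # stride_path k \<omega> (Suc s)))
    = (\<Sum>s<k. c 0 (min \<omega> (Suc s))) + (\<Sum>x = 1..<\<omega>. c x (min \<omega> (x + k)))"
proof -
  have "(\<Sum>s<k. path_cost c (0 # stride_path k \<omega> (Suc s))) = (\<Sum>s<k. c 0 (min \<omega> (Suc s))
      + (\<Sum>x | x < \<omega> \<and> (\<exists>m. x = Suc s + m * k). c x (min \<omega> (x + k))))"
    using assms by (simp add: path_cost_Cons stride_path_not_Nil hd_stride_path path_cost_stride_path)
  also have "\<dots> = (\<Sum>s<k. c 0 (min \<omega> (Suc s))) + (\<Sum>x = 1..<\<omega>. c x (min \<omega> (x + k)))"
    using assms by (simp only: sum.distrib sum_stride_classes)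
  finally show ?thesis .
qed

lemma arc_cost_le_charge:
  fixes W a C :: real and R :: "nat \<Rightarrow> real"
  assumes "W \<ge> 0" "a > 0" "ell \<le> C * card {t. t < N \<and> W / a ^ j < R t}"
  shows "W / a ^ i * ell \<le> C * (\<Sum>t<N. if W / a ^ j < R t then W / a ^ i else 0)"
proof -
  have "W / a ^ i * ell \<le> W / a ^ i * (C * card {t. t < N \<and> W / a ^ j < R t})"
    using assms by (intro mult_left_mono) auto
  also have "\<dots> = C * (\<Sum>t<N. if W / a ^ j < R t then W / a ^ i else 0)"
    by (simp add: sum.If_cases Int_def)
  finally show ?thesis .
qed

lemma stride_arcs_cost_le:
  fixes W a C :: real and ell R :: "nat \<Rightarrow> real"
  assumes "W > 0" "a > 1" "C \<ge> 0" "\<omega> > 0"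
    and R: "\<And>t. 0 \<le> R t" "\<And>t. R t \<le> W"
    and ell: "\<And>j. 1 \<le> j \<Longrightarrow> j \<le> \<omega> \<Longrightarrow> ell j \<le> C * card {t. t < N \<and> W / a ^ j < R t}"
    and k: "a ^ k \<le> exp 1 * (a - 1) * k"
  shows "(\<Sum>s<k. W * ell (min \<omega> (Suc s))) + (\<Sum>x = 1..<\<omega>. W / a ^ x * ell (min \<omega> (x + k)))
    \<le> k * (C * a * exp 1 * (\<Sum>t<N. R t))"
proof -
  define charge where "charge t i j = (if W / a ^ j < R t then W / a ^ i else 0)" for t i j
  have arc: "W / a ^ i * ell j \<le> C * (\<Sum>t<N. charge t i j)" if "1 \<le> j" "j \<le> \<omega>" for i j
    unfolding charge_def using assms(1,2) ell[OF that] by (intro arc_cost_le_charge) auto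
  have charge: "(\<Sum>s<k. charge t 0 (min \<omega> (Suc s))) + (\<Sum>x = 1..<\<omega>. charge t x (min \<omega> (x + k)))
      \<le> k * (a * exp 1 * R t)" for t
  proof -
    have "(\<Sum>s<k. charge t 0 (min \<omega> (Suc s))) + (\<Sum>x = 1..<\<omega>. charge t x (min \<omega> (x + k)))
        \<le> R t * a ^ (k + 1) / (a - 1)"
      using stride_charge_le[OF assms(2) R(1)[of t] R(2)[of t], of \<omega> k]
      by (simp add: charge_def cong: if_cong)
    also have "\<dots> \<le> R t * (a * (exp 1 * (a - 1) * k)) / (a - 1)"
      using k assms(2) R(1)[of t] by (intro divide_right_mono mult_left_mono) auto
    also have "\<dots> = k * (a * exp 1 * R t)"
      using assms(2) by simp
    finally show ?thesis .
  qed
  have "(\<Sum>s<k. W * ell (min \<omega> (Suc s))) + (\<Sum>x = 1..<\<omega>. W / a ^ x * ell (min \<omega> (x + k)))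
      \<le> (\<Sum>s<k. C * (\<Sum>t<N. charge t 0 (min \<omega> (Suc s))))
        + (\<Sum>x = 1..<\<omega>. C * (\<Sum>t<N. charge t x (min \<omega> (x + k))))"
    using arc[of _ 0] arc assms(4) by (intro add_mono sum_mono) auto
  also have "\<dots> = C * (\<Sum>t<N. (\<Sum>s<k. charge t 0 (min \<omega> (Suc s)))
      + (\<Sum>x = 1..<\<omega>. charge t x (min \<omega> (x + k))))"
    by (simp only: sum_distrib_left distrib_left sum.distrib
        sum.swap[of _ "{..<k}"] sum.swap[of _ "{1..<\<omega>}"])
  also have "\<dots> \<le> C * (\<Sum>t<N. k * (a * exp 1 * R t))"
    using charge assms(3) by (intro mult_left_mono sum_mono) auto
  also have "\<dots> = k * (C * a * exp 1 * (\<Sum>t<N. R t))"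
    by (simp add: sum_distrib_left mult_ac)
  finally show ?thesis .
qed

lemma shortest_path_cost_le_sum:
  fixes W a C :: real and ell R :: "nat \<Rightarrow> real"
  assumes "W > 0" "a > 1" "C \<ge> 0"
    and R: "\<And>t. 0 \<le> R t" "\<And>t. R t \<le> W"
    and ell: "\<And>j. 1 \<le> j \<Longrightarrow> j \<le> \<omega> \<Longrightarrow> ell j \<le> C * card {t. t < N \<and> W / a ^ j < R t}"
  shows "shortest_path_cost \<omega> (\<lambda>i j. W / a ^ i * ell j) \<le> C * a * exp 1 * (\<Sum>t<N. R t)"
proof (cases "\<omega> = 0")
  case True
  hence "shortest_path_cost \<omega> (\<lambda>i j. W / a ^ i * ell j) \<le> 0"
    using shortest_path_cost_le[of \<omega> "[0]"] by (simp add: H_path_def)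
  also have "0 \<le> C * a * exp 1 * (\<Sum>t<N. R t)"
    using assms by (simp add: sum_nonneg)
  finally show ?thesis .
next
  case False
  obtain k where k: "k \<ge> 1" "a ^ k \<le> exp 1 * (a - 1) * k"
    using exists_power_le_exp_mult[OF assms(2)] by blast
  define c where "c = (\<lambda>i j. W / a ^ i * ell j)"
  define P where "P s = 0 # stride_path k \<omega> (Suc s)" for s
  have "(\<Sum>s<k. path_cost c (P s)) \<le> k * (C * a * exp 1 * (\<Sum>t<N. R t))"
    using sum_path_cost_stride_paths[of k c \<omega>] stride_arcs_cost_le[OF assms(1-3) _ R ell k(2)] k(1) False
    by (simp add: P_def c_def)
  then obtain s where "path_cost c (P s) \<le> C * a * exp 1 * (\<Sum>t<N. R t)"
    using exists_le_of_sum_le[of k] k(1) by auto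
  moreover have "H_path \<omega> (P s)"
    unfolding P_def using False by (intro H_path_stride_path) simp
  ultimately have "shortest_path_cost \<omega> c \<le> C * a * exp 1 * (\<Sum>t<N. R t)"
    by (meson shortest_path_cost_le order_trans)
  thus ?thesis
    unfolding c_def .
qed

section \<open>Expanding search patterns\<close>

lemma is_tree_singleton: "is_tree {r} {}"
  by (simp add: is_tree_def connected_graph_def graph_def)

lemma is_tree_insert_edge:
  assumes "is_tree U F" "u \<in> U" "v \<notin> U"
  shows "is_tree (insert v U) (insert {u, v} F)"
proof -
  define F' where "F' = insert {u, v} F"
  have "finite U" and edges: "\<forall>e\<in>F. e \<subseteq> U \<and> card e = 2"
    and conn: "\<forall>x\<in>U. \<forall>y\<in>U. (x, y) \<in> (adj F)\<^sup>*" and card: "card F + 1 = card U"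
    using assms(1) by (auto simp: is_tree_def connected_graph_def graph_def)
  have "finite F"
    using edges \<open>finite U\<close> by (meson Pow_iff finite_Pow_iff finite_subset subsetI)
  have "{u, v} \<notin> F" "u \<noteq> v"
    using edges assms(2,3) by auto
  have mono: "(adj F)\<^sup>* \<subseteq> (adj F')\<^sup>*"
    by (rule rtrancl_mono) (auto simp: adj_def F'_def)
  have "(u, v) \<in> adj F'" "(v, u) \<in> adj F'"
    by (auto simp: adj_def F'_def insert_commute)
  hence "(x, u) \<in> (adj F')\<^sup>* \<and> (u, x) \<in> (adj F')\<^sup>*" if "x \<in> insert v U" for x
    using that conn assms(2) mono by blast
  hence "\<forall>x\<in>insert v U. \<forall>y\<in>insert v U. (x, y) \<in> (adj F')\<^sup>*"
    by (meson rtrancl_trans)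
  moreover have "graph (insert v U) F'"
    using \<open>finite U\<close> edges assms(2) \<open>u \<noteq> v\<close> by (auto simp: graph_def F'_def)
  moreover have "card F' + 1 = card (insert v U)"
    using card \<open>finite F\<close> \<open>{u, v} \<notin> F\<close> \<open>finite U\<close> assms(3) by (simp add: F'_def)
  ultimately show ?thesis
    by (simp add: is_tree_def connected_graph_def F'_def)
qed

lemma rtrancl_leaves_set:
  "(x, y) \<in> R\<^sup>* \<Longrightarrow> x \<in> U \<Longrightarrow> y \<notin> U \<Longrightarrow> \<exists>a b. (a, b) \<in> R \<and> a \<in> U \<and> b \<notin> U"
  by (induction rule: rtrancl_induct) auto

lemma connected_graph_edge_leaving:
  assumes "connected_graph V E" "x \<in> U" "x \<in> V" "y \<in> V - U"
  obtains u v where "{u, v} \<in> E" "u \<in> U" "v \<notin> U"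
  using assms rtrancl_leaves_set[of x y "adj E" U]
  by (auto simp: connected_graph_def adj_def)

lemma mem_Union_take_if_mem_hd:
  assumes "r \<in> hd xs" "take i xs \<noteq> []"
  shows "r \<in> \<Union> (set (take i xs))"
proof -
  have "hd (take i xs) = hd xs"
    using assms(2) by simp
  thus ?thesis
    using hd_in_set[OF assms(2)] assms(1) by auto
qed

lemma expanding_pattern_take_tree:
  assumes "expanding_pattern E r \<sigma>"
  shows "is_tree (insert r (\<Union> (set (take i \<sigma>)))) (set (take i \<sigma>))"
proof (cases "take i \<sigma> = []")
  case True
  show ?thesis
    unfolding True by (simp add: is_tree_singleton)
next
  case False
  define n where "n = min i (length \<sigma>)"
  have "take i \<sigma> = take n \<sigma>"
    by (simp add: n_def min_def)
  moreover have "n \<in> {1..length \<sigma>}"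
    using False by (auto simp: n_def Suc_le_eq)
  ultimately have "is_tree (\<Union> (set (take i \<sigma>))) (set (take i \<sigma>))"
    using assms by (simp add: expanding_pattern_def)
  moreover have "r \<in> hd \<sigma>"
    using assms False by (auto simp: expanding_pattern_def)
  hence "r \<in> \<Union> (set (take i \<sigma>))"
    using False by (rule mem_Union_take_if_mem_hd)
  ultimately show ?thesis
    by (simp add: insert_absorb)
qed

lemma expanding_pattern_snoc:
  assumes "expanding_pattern E r \<sigma>" "{u, v} \<in> E"
    and "u \<in> insert r (\<Union> (set \<sigma>))" "v \<notin> insert r (\<Union> (set \<sigma>))"
  shows "expanding_pattern E r (\<sigma> @ [{u, v}])"
  unfolding expanding_pattern_def
proof (intro conjI impI ballI)
  show "set (\<sigma> @ [{u, v}]) \<subseteq> E"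
    using assms(1,2) by (simp add: expanding_pattern_def)
  show hd: "r \<in> hd (\<sigma> @ [{u, v}])"
    using assms(1,3) by (cases \<sigma>) (auto simp: expanding_pattern_def)
  fix i
  assume i: "i \<in> {1..length (\<sigma> @ [{u, v}])}"
  have "is_tree (insert r (\<Union> (set (take i (\<sigma> @ [{u, v}]))))) (set (take i (\<sigma> @ [{u, v}])))"
  proof (cases "i \<le> length \<sigma>")
    case True
    thus ?thesis
      using expanding_pattern_take_tree[OF assms(1)] by simp
  next
    case False
    hence "take i (\<sigma> @ [{u, v}]) = \<sigma> @ [{u, v}]"
      using i by simp
    moreover have "is_tree (insert r (\<Union> (set \<sigma>))) (set \<sigma>)"
      using expanding_pattern_take_tree[OF assms(1), of "length \<sigma>"] by simp
    moreover have "insert r (\<Union> (set (\<sigma> @ [{u, v}]))) = insert v (insert r (\<Union> (set \<sigma>)))"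
      using assms(3) by auto
    ultimately show ?thesis
      using is_tree_insert_edge[OF _ assms(3,4)] by simp
  qed
  moreover have "take i (\<sigma> @ [{u, v}]) \<noteq> []"
    using i by auto
  hence "r \<in> \<Union> (set (take i (\<sigma> @ [{u, v}])))"
    by (rule mem_Union_take_if_mem_hd[OF hd])
  ultimately show "is_tree (\<Union> (set (take i (\<sigma> @ [{u, v}])))) (set (take i (\<sigma> @ [{u, v}])))"
    by (simp add: insert_absorb)
qed

lemma exists_spanning_pattern:
  assumes G: "connected_graph V E" and "r \<in> V"
  shows "\<exists>\<sigma>. expanding_pattern E r \<sigma> \<and> insert r (\<Union> (set \<sigma>)) = V"
proof -
  have "finite V" and edges: "\<forall>e\<in>E. e \<subseteq> V"
    using G by (auto simp: connected_graph_def graph_def)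
  have "\<exists>\<sigma>'. expanding_pattern E r \<sigma>' \<and> insert r (\<Union> (set \<sigma>')) = V"
    if "expanding_pattern E r \<sigma>" for \<sigma>
    using that
  proof (induction "card (V - insert r (\<Union> (set \<sigma>)))" arbitrary: \<sigma> rule: less_induct)
    case less
    let ?U = "insert r (\<Union> (set \<sigma>))"
    have "?U \<subseteq> V"
      using less.prems edges \<open>r \<in> V\<close> by (auto simp: expanding_pattern_def)
    show ?case
    proof (cases "?U = V")
      case False
      then obtain y where "y \<in> V - ?U"
        using \<open>?U \<subseteq> V\<close> by blast
      then obtain u v where uv: "{u, v} \<in> E" "u \<in> ?U" "v \<notin> ?U"
        using connected_graph_edge_leaving[OF G, of r ?U] \<open>r \<in> V\<close> by blast
      have "v \<in> V"
        using uv(1) edges by blast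
      have "card (V - insert v ?U) < card (V - ?U)"
        using \<open>finite V\<close> \<open>v \<in> V\<close> uv(3) by (intro psubset_card_mono) auto
      moreover have "insert r (\<Union> (set (\<sigma> @ [{u, v}]))) = insert v ?U"
        using uv(2) by auto
      ultimately show ?thesis
        using less.hyps expanding_pattern_snoc[OF less.prems uv] by metis
    qed (use less.prems in blast)
  qed
  moreover have "expanding_pattern E r []"
    by (simp add: expanding_pattern_def)
  ultimately show ?thesis
    by blast
qed

lemma ESP_opt_attained:
  assumes "connected_graph V E" "r \<in> V"
  obtains \<sigma> where "feasible_pattern V E r w \<sigma>" "total_latency V len w r \<sigma> = ESP_opt V E r len w"
proof -
  obtain \<sigma> where "expanding_pattern E r \<sigma>" "insert r (\<Union> (set \<sigma>)) = V"
    using exists_spanning_pattern[OF assms] by blast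
  hence "feasible_pattern V E r w \<sigma>"
    by (auto simp: feasible_pattern_def Vstar_def)
  hence "ESP_opt V E r len w \<in> {total_latency V len w r \<sigma> | \<sigma>. feasible_pattern V E r w \<sigma>}"
    unfolding ESP_opt_def by (intro Inf_nat_def1) blast
  then obtain \<sigma>' where "feasible_pattern V E r w \<sigma>'" "ESP_opt V E r len w = total_latency V len w r \<sigma>'"
    by blast
  thus ?thesis
    using that by metis
qed

section \<open>Latency profile of a pattern\<close>

lemma latency_eq_prefix_length:
  assumes "v \<in> \<Union> (set \<sigma>)" "v \<noteq> r"
  obtains i where "i < length \<sigma>" "v \<in> \<sigma> ! i"
    "latency len r \<sigma> v = sum_list (map len (take (Suc i) \<sigma>))"
proof -
  define i where "i = (LEAST i. i < length \<sigma> \<and> v \<in> \<sigma> ! i)"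
  have "i < length \<sigma> \<and> v \<in> \<sigma> ! i"
    unfolding i_def by (rule LeastI_ex) (use assms(1) in \<open>auto simp: in_set_conv_nth\<close>)
  moreover have "latency len r \<sigma> v = sum_list (map len (take (Suc i) \<sigma>))"
    using assms(2) by (simp add: latency_def i_def)
  ultimately show ?thesis
    using that by blast
qed

lemma sum_set_le_sum_list: "sum (f :: 'b \<Rightarrow> nat) (set xs) \<le> sum_list (map f xs)"
proof (induction xs)
  case (Cons x xs)
  have "sum f (set (x # xs)) \<le> f x + sum f (set xs)"
    by (simp add: sum.insert_if)
  thus ?case
    using Cons by simp
qed simp

lemma quota_opt_le_latency:
  assumes G: "connected_graph V E" and "r \<in> V" and fp: "feasible_pattern V E r w \<sigma>"
    and q: "q \<le> real (\<Sum>v | v \<in> Vstar V w \<and> latency len r \<sigma> v \<le> t. w v)"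
  shows "quota_opt V E r len w q \<le> t"
proof -
  have "finite V" and edges: "\<forall>e\<in>E. e \<subseteq> V"
    using G by (auto simp: connected_graph_def graph_def)
  have ep: "expanding_pattern E r \<sigma>" and cover: "Vstar V w \<subseteq> insert r (\<Union> (set \<sigma>))"
    using fp by (auto simp: feasible_pattern_def)
  define fits where "fits i \<longleftrightarrow> i \<le> length \<sigma> \<and> sum_list (map len (take i \<sigma>)) \<le> t" for i
  define n where "n = (GREATEST i. fits i)"
  have "fits 0"
    by (simp add: fits_def)
  hence n: "fits n" and n_ge: "fits i \<Longrightarrow> i \<le> n" for i
    unfolding n_def using Greatest_le_nat[of fits _ "length \<sigma>"] GreatestI_nat[of fits 0 "length \<sigma>"]
    by (auto simp: fits_def)
  define T' where "T' = (insert r (\<Union> (set (take n \<sigma>))), set (take n \<sigma>))"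
  have covered: "{v. v \<in> Vstar V w \<and> latency len r \<sigma> v \<le> t} \<subseteq> fst T'"
  proof
    fix v
    assume v: "v \<in> {v. v \<in> Vstar V w \<and> latency len r \<sigma> v \<le> t}"
    show "v \<in> fst T'"
    proof (cases "v = r")
      case False
      with v cover obtain i where i: "i < length \<sigma>" "v \<in> \<sigma> ! i"
        and "latency len r \<sigma> v = sum_list (map len (take (Suc i) \<sigma>))"
        using latency_eq_prefix_length[of v \<sigma> r len] by blast
      hence "Suc i \<le> n"
        using v by (intro n_ge) (simp add: fits_def)
      hence "\<sigma> ! i \<in> set (take n \<sigma>)"
        using i(1) by (metis in_set_conv_nth length_take min_less_iff_conj nth_take Suc_le_lessD)
      thus ?thesis
        using i(2) by (auto simp: T'_def)
    qed (simp add: T'_def)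
  qed
  have "set (take n \<sigma>) \<subseteq> E"
    using ep set_take_subset by (fastforce simp: expanding_pattern_def)
  hence "rooted_subtree V E r T'"
    using expanding_pattern_take_tree[OF ep] edges \<open>r \<in> V\<close>
    by (auto simp: rooted_subtree_def T'_def)
  moreover have "q \<le> real (tree_weight w T')"
  proof -
    have "finite (fst T')"
      using \<open>rooted_subtree V E r T'\<close> \<open>finite V\<close> by (auto simp: rooted_subtree_def intro: finite_subset)
    hence "(\<Sum>v | v \<in> Vstar V w \<and> latency len r \<sigma> v \<le> t. w v) \<le> tree_weight w T'"
      unfolding tree_weight_def using covered by (intro sum_mono2) auto
    thus ?thesis
      using q by linarith
  qed
  ultimately have "tree_length len T'
      \<in> {tree_length len T | T. rooted_subtree V E r T \<and> real (tree_weight w T) \<ge> q}"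
    by blast
  hence "quota_opt V E r len w q \<le> tree_length len T'"
    unfolding quota_opt_def by (rule cInf_lower) simp
  also have "\<dots> \<le> t"
    using sum_set_le_sum_list[of len "take n \<sigma>"] n by (simp add: tree_length_def T'_def fits_def)
  finally show ?thesis .
qed

lemma sum_Vstar: "finite V \<Longrightarrow> (\<Sum>v\<in>Vstar V w. w v) = (\<Sum>v\<in>V. w v)"
  unfolding Vstar_def by (rule sum.mono_neutral_left) auto

lemma antimono_card_less_le:
  fixes f :: "nat \<Rightarrow> 'b::linorder"
  assumes "antimono f" "f N \<le> \<theta>"
  shows "f (card {t. t < N \<and> \<theta> < f t}) \<le> \<theta>"
proof (rule ccontr)
  define m where "m = card {t. t < N \<and> \<theta> < f t}"
  assume "\<not> f m \<le> \<theta>"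
  hence above: "\<theta> < f t" if "t \<le> m" for t
    using antimonoD[OF assms(1) that] by simp
  have "m < N"
    using above[of m] assms antimonoD[of f N m] by force
  hence "{..m} \<subseteq> {t. t < N \<and> \<theta> < f t}"
    using above by auto
  hence "card {..m} \<le> m"
    unfolding m_def by (intro card_mono) auto
  thus False
    by simp
qed

lemma layer_cake_sum:
  fixes L w :: "'a \<Rightarrow> nat"
  assumes "finite A" "\<And>v. v \<in> A \<Longrightarrow> L v \<le> N"
  shows "(\<Sum>t<N. \<Sum>v | v \<in> A \<and> t < L v. w v) = (\<Sum>v\<in>A. w v * L v)"
proof -
  have "(\<Sum>t<N. \<Sum>v | v \<in> A \<and> t < L v. w v) = (\<Sum>t<N. \<Sum>v\<in>A. if t < L v then w v else 0)"
    using assms(1) by (simp add: sum.inter_filter)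
  also have "\<dots> = (\<Sum>v\<in>A. \<Sum>t<N. if t < L v then w v else 0)"
    by (rule sum.swap)
  also have "\<dots> = (\<Sum>v\<in>A. w v * L v)"
  proof (rule sum.cong)
    fix v
    assume "v \<in> A"
    hence "{..<N} \<inter> {t. t < L v} = {..<L v}"
      using assms(2)[of v] by auto
    thus "(\<Sum>t<N. if t < L v then w v else 0) = w v * L v"
      by (simp add: sum.If_cases)
  qed simp
  finally show ?thesis .
qed

definition remaining_weight ::
  "'a set \<Rightarrow> ('a \<Rightarrow> nat) \<Rightarrow> ('a set \<Rightarrow> nat) \<Rightarrow> 'a \<Rightarrow> 'a set list \<Rightarrow> nat \<Rightarrow> nat" where
  "remaining_weight V w len r \<sigma> t = (\<Sum>v | v \<in> Vstar V w \<and> t < latency len r \<sigma> v. w v)"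

lemma remaining_weight_le: "finite V \<Longrightarrow> remaining_weight V w len r \<sigma> t \<le> (\<Sum>v\<in>V. w v)"
  unfolding remaining_weight_def sum_Vstar[symmetric] by (intro sum_mono2) (auto simp: Vstar_def)

lemma sum_remaining_weight:
  assumes "finite V" "\<And>v. v \<in> Vstar V w \<Longrightarrow> latency len r \<sigma> v \<le> N"
  shows "(\<Sum>t<N. remaining_weight V w len r \<sigma> t) = total_latency V len w r \<sigma>"
  unfolding remaining_weight_def total_latency_def
  using assms by (intro layer_cake_sum) (auto simp: Vstar_def)

lemma quota_opt_le_card_remaining:
  assumes G: "connected_graph V E" and "r \<in> V" and fp: "feasible_pattern V E r w \<sigma>"
    and N: "\<And>v. v \<in> Vstar V w \<Longrightarrow> latency len r \<sigma> v \<le> N" and "0 \<le> \<theta>"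
  shows "quota_opt V E r len w (real (\<Sum>v\<in>V. w v) - \<theta>)
    \<le> card {t. t < N \<and> \<theta> < real (remaining_weight V w len r \<sigma> t)}"
proof -
  let ?L = "latency len r \<sigma>"
  define R where "R t = real (remaining_weight V w len r \<sigma> t)" for t
  define \<tau> where "\<tau> = card {t. t < N \<and> \<theta> < R t}"
  have "finite V"
    using G by (simp add: connected_graph_def graph_def)
  hence fin: "finite (Vstar V w)"
    by (simp add: Vstar_def)
  have "antimono R"
    unfolding antimono_def R_def remaining_weight_def using fin by (auto intro!: sum_mono2)
  moreover have "{v. v \<in> Vstar V w \<and> N < ?L v} = {}"
    by (auto dest!: N)
  hence "R N \<le> \<theta>"
    using \<open>0 \<le> \<theta>\<close> by (simp only: R_def remaining_weight_def sum.empty of_nat_0)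
  ultimately have "R \<tau> \<le> \<theta>"
    unfolding \<tau>_def by (rule antimono_card_less_le)
  have "(\<Sum>v\<in>V. w v) = (\<Sum>v\<in>Vstar V w \<inter> {v. ?L v \<le> \<tau>}. w v) + (\<Sum>v\<in>Vstar V w - {v. ?L v \<le> \<tau>}. w v)"
    using sum_Vstar[OF \<open>finite V\<close>] sum.Int_Diff[OF fin] by metis
  also have "Vstar V w \<inter> {v. ?L v \<le> \<tau>} = {v. v \<in> Vstar V w \<and> ?L v \<le> \<tau>}"
    by auto
  also have "Vstar V w - {v. ?L v \<le> \<tau>} = {v. v \<in> Vstar V w \<and> \<tau> < ?L v}"
    by auto
  finally have "real (\<Sum>v\<in>V. w v) - \<theta> \<le> real (\<Sum>v | v \<in> Vstar V w \<and> ?L v \<le> \<tau>. w v)"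
    using \<open>R \<tau> \<le> \<theta>\<close> unfolding R_def remaining_weight_def by linarith
  thus ?thesis
    using quota_opt_le_latency[OF G \<open>r \<in> V\<close> fp] unfolding \<tau>_def R_def by blast
qed

theorem lemma7:
  fixes V :: "'a set" and E :: "'a set set" and r :: 'a
    and len :: "'a set \<Rightarrow> nat" and w :: "'a \<Rightarrow> nat"
    and \<epsilon> :: real and W :: nat and \<omega> :: nat
    and T :: "nat \<Rightarrow> 'a set \<times> 'a set set"
  assumes G: "connected_graph V E" and r: "r \<in> V"
    and W_def: "W = (\<Sum>v\<in>V. w v)" and W_pos: "W > 0"
    and eps: "\<epsilon> > 0"
    and omega_def: "\<omega> = nat \<lceil>ln (real W) / ln (1 + \<epsilon>)\<rceil>"
    and T0: "T 0 = ({r}, {})"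
    and T_tree: "\<And>i. i \<le> \<omega> \<Longrightarrow> rooted_subtree V E r (T i)"
    and T_quota: "\<And>i. i \<le> \<omega> \<Longrightarrow>
        real (tree_weight w (T i)) \<ge> real W - real W / (1 + \<epsilon>) ^ i"
    and T_approx: "\<And>i. i \<le> \<omega> \<Longrightarrow>
        real (tree_length len (T i)) \<le> 5 / 2 * real (quota_opt V E r len w (real W - real W / (1 + \<epsilon>) ^ i))"
  shows "shortest_path_cost \<omega> (\<lambda>i j. real W / (1 + \<epsilon>) ^ i * real (tree_length len (T j)))
         \<le> 5 / 2 * (1 + \<epsilon>) * exp 1 * real (ESP_opt V E r len w)"
proof -
  obtain \<sigma> where fp: "feasible_pattern V E r w \<sigma>"
    and opt: "total_latency V len w r \<sigma> = ESP_opt V E r len w"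
    using ESP_opt_attained[OF G r] .
  have "finite V"
    using G by (simp add: connected_graph_def graph_def)
  define N where "N = (\<Sum>v\<in>Vstar V w. latency len r \<sigma> v)"
  have N: "latency len r \<sigma> v \<le> N" if "v \<in> Vstar V w" for v
    unfolding N_def using \<open>finite V\<close> that by (intro member_le_sum) (auto simp: Vstar_def)
  let ?R = "\<lambda>t. real (remaining_weight V w len r \<sigma> t)"
  have quota: "quota_opt V E r len w (real W - \<theta>) \<le> card {t. t < N \<and> \<theta> < ?R t}" if "0 \<le> \<theta>" for \<theta>
    unfolding W_def by (rule quota_opt_le_card_remaining[OF G r fp N that])
  have "shortest_path_cost \<omega> (\<lambda>i j. real W / (1 + \<epsilon>) ^ i * real (tree_length len (T j)))
      \<le> 5 / 2 * (1 + \<epsilon>) * exp 1 * (\<Sum>t<N. ?R t)"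
  proof (rule shortest_path_cost_le_sum)
    show "0 \<le> ?R t" "?R t \<le> W" for t
      using remaining_weight_le[OF \<open>finite V\<close>, of w len r \<sigma> t] by (simp_all flip: W_def)
    show "real (tree_length len (T j)) \<le> 5 / 2 * card {t. t < N \<and> W / (1 + \<epsilon>) ^ j < ?R t}"
      if "1 \<le> j" "j \<le> \<omega>" for j
      using T_approx[OF that(2)] quota[of "W / (1 + \<epsilon>) ^ j"] eps by simp
  qed (use W_pos eps in auto)
  also have "(\<Sum>t<N. ?R t) = ESP_opt V E r len w"
    using sum_remaining_weight[OF \<open>finite V\<close> N] opt by (simp flip: of_nat_sum)
  finally show ?thesis .
qed

end
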